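(* Let $n\ge 4$ and for each $k\in\mathbb{N}$ let $w_k$ be the word $01\cdots(n-1)$. Then the sequence of pointed $I_n$-sets $(I_n(w_k))_{k\in\mathbb{N}}$ does not have the Ramsey property.
   Context: $I_n$ is the monoid under composition of all $f\colon\{0,\dots,n-1\}\to\{0,\dots,n-1\}$ with $f(0)=0$ and $f(i-1)\le f(i)\le f(i-1)+1$ for $0<i<n$. For a finite word $w$ over the alphabet $\{0,\dots,n-1\}$ containing the letter $n-1$, and $f\in I_n$, $f(w)$ is the word obtained by applying $f$ letter by letter; $I_n(w)=\{f(w):f\in I_n\}$ with the action $g\cdot f(w)=(g\circ f)(w)$ and distinguished element $w$ is a pointed $I_n$-set. A pointed $M$-set is an $M$-set $X$ with a distinguished point $x$ with $Mx=X$. For a sequence of sets $(X_k)$, $\langle(X_k)\rangle$ is the set of finite sequences $x_1\cdots x_r$ with $x_i\in X_{m_i}$ for some $m_1<\cdots<m_r$, a partial semigroup under concatenation (product defined iff the index sets can be chosen with all indices of the first before all indices of the second); $M$ acts coordinatewise. A sequence $(u_i)$ is basic if $u_{i_1}\cdots u_{i_r}$ is defined for all $i_1<\cdots<i_r$. $(X_k)$ has the Ramsey property if for every finite coloring of $\langle(X_k)\rangle$ there is a basic sequence $(u_i)$ such that each $u_i$ has as an entry the distinguished element of the relevant $X_k$, and all words $a_0(u_{i_0})\cdots a_l(u_{i_l})$ with $i_0<\cdots<i_l$, $a_j\in M$, at least one $a_j=1_M$, have the same color. *)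

theory Defs
  imports Main
begin

text \<open>The monoid I_n. Elements are functions on {0..n-1}; to make equality
  (in particular equality with the unit id) extensional, we fix them to be the
  identity outside {0..n-1}.\<close>
definition In :: "nat \<Rightarrow> (nat \<Rightarrow> nat) set" where
  "In n = {f. f 0 = 0
              \<and> (\<forall>i. 0 < i \<and> i < n \<longrightarrow> f (i - 1) \<le> f i \<and> f i \<le> f (i - 1) + 1)
              \<and> (\<forall>i\<ge>n. f i = i)}"

definition In_orbit :: "nat \<Rightarrow> nat list \<Rightarrow> nat list set" where
  "In_orbit n w = (\<lambda>f. map f w) ` In n"

text \<open>The partial semigroup of finite (nonempty) sequences x_1...x_r with
  x_i in X (m_i) for some m_1 < ... < m_r.\<close>
definition FIN_seq :: "(nat \<Rightarrow> 'x set) \<Rightarrow> 'x list set" where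
  "FIN_seq X = {xs. xs \<noteq> [] \<and> (\<exists>m. strict_mono m \<and> (\<forall>j<length xs. xs ! j \<in> X (m j)))}"

definition prod_defined :: "(nat \<Rightarrow> 'x set) \<Rightarrow> 'x list \<Rightarrow> 'x list \<Rightarrow> bool" where
  "prod_defined X xs ys \<longleftrightarrow> xs \<in> FIN_seq X \<and> ys \<in> FIN_seq X \<and>
     (\<exists>m. strict_mono m \<and> (\<forall>j<length (xs @ ys). (xs @ ys) ! j \<in> X (m j)))"

definition basic_seq :: "(nat \<Rightarrow> 'x set) \<Rightarrow> (nat \<Rightarrow> 'x list) \<Rightarrow> bool" where
  "basic_seq X u \<longleftrightarrow> (\<forall>r idx. 1 \<le> r \<and> strict_mono (idx :: nat \<Rightarrow> nat) \<longrightarrow>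
       concat (map (\<lambda>j. u (idx j)) [0..<r]) \<in> FIN_seq X)"

definition has_point :: "(nat \<Rightarrow> 'x set) \<Rightarrow> (nat \<Rightarrow> 'x) \<Rightarrow> 'x list \<Rightarrow> bool" where
  "has_point X pt xs \<longleftrightarrow> (\<exists>m. strict_mono m \<and> (\<forall>j<length xs. xs ! j \<in> X (m j))
       \<and> (\<exists>j<length xs. xs ! j = pt (m j)))"

text \<open>Ramsey property for a sequence (X_k) of pointed M-sets (points pt k), where
  the monoid M (carrier, unit one) acts by act; the action on sequences is coordinatewise.\<close>
definition ramsey_property ::
  "'m set \<Rightarrow> 'm \<Rightarrow> ('m \<Rightarrow> 'x \<Rightarrow> 'x) \<Rightarrow> (nat \<Rightarrow> 'x set) \<Rightarrow> (nat \<Rightarrow> 'x) \<Rightarrow> bool" where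
  "ramsey_property M one act X pt \<longleftrightarrow>
     (\<forall>c :: 'x list \<Rightarrow> nat. (\<exists>r. \<forall>x\<in>FIN_seq X. c x < r) \<longrightarrow>
        (\<exists>u col. (\<forall>i. u i \<in> FIN_seq X \<and> has_point X pt (u i)) \<and> basic_seq X u \<and>
           (\<forall>l idx a. strict_mono (idx :: nat \<Rightarrow> nat) \<and> (\<forall>j\<le>l. a j \<in> M) \<and> (\<exists>j\<le>l. a j = one)
              \<longrightarrow> c (concat (map (\<lambda>j. map (act (a j)) (u (idx j))) [0..<Suc l])) = col)))"

end

theory Submission
  imports Defs
begin

(* Colour a sequence of words by its last word whose final letter is at least n - 2,
  recording whether the second letter of that word is 0. For a Ramsey sequence (u_i), all the
  sequences u_0 g(u_1) with g in I_n get the same colour. If g merges the letters 0 and 1 (shifting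
  the others down), the image of the point 01...(n-1) of u_1 ends in n - 2, and every word of g(u_1)
  has second letter 0: colour 1. If g merges 1 and 2 instead, a word g(f(01...(n-1))) ends in a letter
  at least n - 2 only if f fixes n - 1 (this uses n \<ge> 4), which forces f 1 = 1, so its second
  letter is 1: colour 0. Taking the last high word makes u_0 irrelevant. *)

lemma ramsey_property_two_blocks:
  assumes R: "ramsey_property M one act X pt" and "one \<in> M"
    and bounded: "\<forall>x\<in>FIN_seq X. c x < (r :: nat)"
  obtains v w col where "w \<in> FIN_seq X" "has_point X pt w"
    and "\<And>a. a \<in> M \<Longrightarrow> c (map (act one) v @ map (act a) w) = col"
proof -
  from R bounded obtain u col where
    u: "\<forall>i. u i \<in> FIN_seq X \<and> has_point X pt (u i)" and
    hom: "\<forall>l idx a. strict_mono (idx :: nat \<Rightarrow> nat) \<and> (\<forall>j\<le>l. a j \<in> M) \<and> (\<exists>j\<le>l. a j = one)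
            \<longrightarrow> c (concat (map (\<lambda>j. map (act (a j)) (u (idx j))) [0..<Suc l])) = col"
    unfolding ramsey_property_def by blast
  have "c (map (act one) (u 0) @ map (act a) (u 1)) = col" if "a \<in> M" for a
  proof -
    let ?a = "\<lambda>j. if j = 0 then one else a"
    have "c (concat (map (\<lambda>j. map (act (?a j)) (u (id j))) [0..<Suc 1])) = col"
      using \<open>one \<in> M\<close> \<open>a \<in> M\<close> by (intro hom[rule_format]) (auto simp: strict_mono_def)
    then show ?thesis
      by (simp add: upt_rec)
  qed
  with u that show ?thesis
    by blast
qed

lemma FIN_seq_In_orbit_entries:
  "ws \<in> FIN_seq (\<lambda>k. In_orbit n w) \<Longrightarrow> v \<in> set ws \<Longrightarrow> \<exists>f\<in>In n. v = map f w"
  unfolding FIN_seq_def In_orbit_def by (auto simp: in_set_conv_nth)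

lemma has_point_const: "has_point X (\<lambda>k. p) ws \<Longrightarrow> p \<in> set ws"
  unfolding has_point_def by (auto simp: in_set_conv_nth)

lemma id_In: "id \<in> In n"
  unfolding In_def by auto

definition merge01 :: "nat \<Rightarrow> nat \<Rightarrow> nat" where
  "merge01 n k = (if k = 0 then 0 else if k < n then k - 1 else k)"

definition merge12 :: "nat \<Rightarrow> nat \<Rightarrow> nat" where
  "merge12 n k = (if k \<le> 1 then k else if k < n then k - 1 else k)"

lemma merge01_In: "merge01 n \<in> In n"
  unfolding In_def merge01_def by auto

lemma merge12_In: "merge12 n \<in> In n"
  unfolding In_def merge12_def by auto

definition high_word :: "nat \<Rightarrow> nat list \<Rightarrow> bool" where
  "high_word n v \<longleftrightarrow> n - 2 \<le> v ! (n - 1)"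

definition last_high_colour :: "nat \<Rightarrow> nat list list \<Rightarrow> nat" where
  "last_high_colour n xs =
     (let hs = filter (high_word n) xs in if hs \<noteq> [] \<and> last hs ! 1 = 0 then 1 else 0)"

lemma last_high_colour_less_2: "last_high_colour n xs < 2"
  by (simp add: last_high_colour_def Let_def)

lemma last_high_colour_append_eqI:
  assumes "\<exists>v\<in>set ys. high_word n v"
    and "\<And>v. v \<in> set ys \<Longrightarrow> high_word n v \<Longrightarrow> (v ! 1 = 0 \<longleftrightarrow> c = 1)"
    and "c < 2"
  shows "last_high_colour n (xs @ ys) = c"
proof -
  let ?hs = "filter (high_word n) ys"
  have "?hs \<noteq> []"
    using assms(1) by (auto simp: filter_empty_conv)
  then have "last ?hs \<in> set ys" "high_word n (last ?hs)"
    using last_in_set[of ?hs] by auto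
  with assms(2,3) \<open>?hs \<noteq> []\<close> show ?thesis
    by (auto simp: last_high_colour_def Let_def)
qed

lemma In_le_add_diff:
  assumes f: "f \<in> In n" and "i \<le> j" and "j < n"
  shows "f j \<le> f i + (j - i)"
  using \<open>i \<le> j\<close> \<open>j < n\<close>
proof (induction j)
  case 0
  then show ?case by simp
next
  case (Suc k)
  show ?case
  proof (cases "i = Suc k")
    case False
    with Suc.prems have "f k \<le> f i + (k - i)" "i \<le> k"
      using Suc.IH by auto
    moreover have "f (Suc k) \<le> f (Suc k - 1) + 1"
      using f Suc.prems unfolding In_def by blast
    ultimately show ?thesis
      by simp
  qed simp
qed

lemma In_le_self: "f \<in> In n \<Longrightarrow> j < n \<Longrightarrow> f j \<le> j"
  using In_le_add_diff[of f n 0 j] by (simp add: In_def)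

lemma In_fix_1_if_fix_last:
  assumes f: "f \<in> In n" and "2 \<le> n" and "f (n - 1) = n - 1"
  shows "f 1 = 1"
proof -
  have "f (n - 1) \<le> f 1 + (n - 1 - 1)"
    using In_le_add_diff[OF f, of 1 "n - 1"] \<open>2 \<le> n\<close> by simp
  moreover have "f 1 \<le> 1"
    using In_le_self[OF f, of 1] \<open>2 \<le> n\<close> by simp
  ultimately show ?thesis
    using assms by linarith
qed

lemma last_high_colour_merge01:
  assumes "2 \<le> n"
    and orbit: "\<And>v. v \<in> set ws \<Longrightarrow> \<exists>f\<in>In n. v = map f [0..<n]"
    and "[0..<n] \<in> set ws"
  shows "last_high_colour n (xs @ map (map (merge01 n)) ws) = 1"
proof (rule last_high_colour_append_eqI)
  show "\<exists>v\<in>set (map (map (merge01 n)) ws). high_word n v"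
    using assms(1,3) by (intro bexI[of _ "map (merge01 n) [0..<n]"])
      (auto simp: high_word_def merge01_def)
next
  fix v assume "v \<in> set (map (map (merge01 n)) ws)"
  then obtain x where "x \<in> set ws" and v: "v = map (merge01 n) x"
    by auto
  then obtain f where f: "f \<in> In n" and "x = map f [0..<n]"
    using orbit by blast
  with v have v: "v = map (merge01 n \<circ> f) [0..<n]"
    by simp
  have "f 1 \<le> 1"
    using In_le_self[OF f, of 1] assms(1) by simp
  then show "v ! 1 = 0 \<longleftrightarrow> 1 = (1::nat)"
    using v assms(1) by (simp add: merge01_def)
qed simp

lemma last_high_colour_merge12:
  assumes "n \<ge> 4"
    and orbit: "\<And>v. v \<in> set ws \<Longrightarrow> \<exists>f\<in>In n. v = map f [0..<n]"
    and "[0..<n] \<in> set ws"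
  shows "last_high_colour n (xs @ map (map (merge12 n)) ws) = 0"
proof (rule last_high_colour_append_eqI)
  show "\<exists>v\<in>set (map (map (merge12 n)) ws). high_word n v"
    using assms(1,3) by (intro bexI[of _ "map (merge12 n) [0..<n]"])
      (auto simp: high_word_def merge12_def)
next
  fix v assume "v \<in> set (map (map (merge12 n)) ws)" and high: "high_word n v"
  then obtain x where "x \<in> set ws" and v: "v = map (merge12 n) x"
    by auto
  then obtain f where f: "f \<in> In n" and "x = map f [0..<n]"
    using orbit by blast
  with v have v: "v = map (merge12 n \<circ> f) [0..<n]"
    by simp
  have "f (n - 1) \<le> n - 1"
    using In_le_self[OF f, of "n - 1"] assms(1) by simp
  moreover have "n - 2 \<le> merge12 n (f (n - 1))"
    using high v assms(1) by (simp add: high_word_def)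
  ultimately have "f (n - 1) = n - 1"
    using assms(1) unfolding merge12_def by (auto split: if_splits)
  then have "f 1 = 1"
    using In_fix_1_if_fix_last[OF f] assms(1) by simp
  then show "v ! 1 = 0 \<longleftrightarrow> 0 = (1::nat)"
    using v assms(1) by (simp add: merge12_def)
qed simp

theorem corollary4p7:
  fixes n :: nat
  assumes "n \<ge> 4"
  shows "\<not> ramsey_property (In n) id (\<lambda>f x. map f x)
            (\<lambda>k. In_orbit n [0..<n]) (\<lambda>k. [0..<n])"
proof
  assume R: "ramsey_property (In n) id (\<lambda>f x. map f x)
               (\<lambda>k. In_orbit n [0..<n]) (\<lambda>k. [0..<n])"
  have "\<forall>x\<in>FIN_seq (\<lambda>k. In_orbit n [0..<n]). last_high_colour n x < 2"
    by (simp add: last_high_colour_less_2)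
  then obtain v w col where
    w: "w \<in> FIN_seq (\<lambda>k. In_orbit n [0..<n])" "has_point (\<lambda>k. In_orbit n [0..<n]) (\<lambda>k. [0..<n]) w"
    and same: "\<And>a. a \<in> In n \<Longrightarrow> last_high_colour n (map (map id) v @ map (map a) w) = col"
    by (rule ramsey_property_two_blocks[OF R id_In]) blast
  have orbit: "\<And>x. x \<in> set w \<Longrightarrow> \<exists>f\<in>In n. x = map f [0..<n]"
    using FIN_seq_In_orbit_entries[OF w(1)] .
  have point: "[0..<n] \<in> set w"
    using has_point_const[OF w(2)] .
  have "col = 1"
    using same[OF merge01_In] last_high_colour_merge01[OF _ orbit point] \<open>n \<ge> 4\<close> by simp
  moreover have "col = 0"
    using same[OF merge12_In] last_high_colour_merge12[OF \<open>n \<ge> 4\<close> orbit point] by simp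
  ultimately show False
    by simp
qed

end
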